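(* For each $n\ge1$ there is a bijection $\psi'$ from the set of plane trees with $n$ edges to $\mathfrak S_n(132)$ such that, for every such tree $T$ and $\pi=\psi'(T)$: (1) the number of young leaves of $T$ equals the number of double ascents of $\pi(n+1)=(\pi_1,\dots,\pi_n,n+1)$; (2) the number of old leaves of $T$ equals the number of ascending runs of $\pi(n+1)$.
   Context: A plane tree is a rooted tree in which the children of each vertex are linearly ordered. A leaf is a vertex with no children; the one-vertex tree has no leaves. A leaf is old if it is the leftmost child of its parent, young otherwise. $\mathfrak S_n(132)$ is the set of permutations of $\{1,\dots,n\}$ with no indices $a<b<c$ such that $\pi_a<\pi_c<\pi_b$. For a sequence $\sigma$, a double ascent is an index $i$ with $\sigma_i<\sigma_{i+1}<\sigma_{i+2}$, and an ascending run is a maximal increasing sequence $\sigma_i<\sigma_{i+1}<\cdots<\sigma_{i+k}$ of consecutive entries with $k\ge1$. *)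

theory Defs
  imports Main
begin

datatype ptree = Node "ptree list"

primrec edges :: "ptree \<Rightarrow> nat" where
  "edges (Node ts) = length ts + sum_list (map edges ts)"

text \<open>A leaf is a (necessarily non-root) vertex with no children; the root of the
one-vertex tree is not a leaf. It is old if it is the leftmost child of its parent,
young otherwise.\<close>
primrec old_leaves :: "ptree \<Rightarrow> nat" where
  "old_leaves (Node ts) =
     (case ts of [] \<Rightarrow> 0 | t # _ \<Rightarrow> (if t = Node [] then 1 else 0))
     + sum_list (map old_leaves ts)"

primrec young_leaves :: "ptree \<Rightarrow> nat" where
  "young_leaves (Node ts) =
     length (filter (\<lambda>t. t = Node []) (drop 1 ts))
     + sum_list (map young_leaves ts)"

definition av132 :: "nat \<Rightarrow> nat list set" where
  "av132 n = {\<pi>. length \<pi> = n \<and> distinct \<pi> \<and> set \<pi> = {1..n} \<and>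
      \<not> (\<exists>a b c. a < b \<and> b < c \<and> c < n \<and> \<pi> ! a < \<pi> ! c \<and> \<pi> ! c < \<pi> ! b)}"

definition double_ascents :: "nat list \<Rightarrow> nat" where
  "double_ascents \<sigma> = card {i. i + 2 < length \<sigma> \<and> \<sigma> ! i < \<sigma> ! (i+1) \<and> \<sigma> ! (i+1) < \<sigma> ! (i+2)}"

text \<open>Ascending runs: maximal increasing segments sigma_i < ... < sigma_j of
consecutive entries with j > i, represented by the pair (i, j).\<close>
definition asc_runs :: "nat list \<Rightarrow> nat" where
  "asc_runs \<sigma> = card {(i, j). i < j \<and> j < length \<sigma> \<and>
      (\<forall>k. i \<le> k \<and> k < j \<longrightarrow> \<sigma> ! k < \<sigma> ! (k+1)) \<and>
      (i = 0 \<or> \<not> \<sigma> ! (i - 1) < \<sigma> ! i) \<and>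
      (j + 1 = length \<sigma> \<or> \<not> \<sigma> ! j < \<sigma> ! (j+1))}"

end

theory Submission
  imports Defs
begin

(* A nonempty plane tree is uniquely Node (ts @ [t]), its last subtree split off, and a nonempty
   132-avoiding permutation of {1..n} is uniquely \<alpha> n \<beta> with every entry of \<alpha> above every entry
   of \<beta>. Matching the two decompositions recursively gives the bijection. After appending n+1,
   the ascent word of the image of Node (ts @ [t]) is that of Node ts, then one letter that is an
   ascent exactly when t is a leaf, then that of t. If ts is nonempty, the word of Node ts ends with
   an ascent, so the young leaf t yields one more double ascent; if ts is empty, the old leaf t
   starts one more ascending run. *)

definition avoids132 :: "'a::linorder list \<Rightarrow> bool" where
  "avoids132 \<sigma> \<longleftrightarrow>
     \<not> (\<exists>a b c. a < b \<and> b < c \<and> c < length \<sigma> \<and> \<sigma> ! a < \<sigma> ! c \<and> \<sigma> ! c < \<sigma> ! b)"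

lemma av132_iff:
  "\<pi> \<in> av132 n \<longleftrightarrow> length \<pi> = n \<and> distinct \<pi> \<and> set \<pi> = {1..n} \<and> avoids132 \<pi>"
  unfolding av132_def avoids132_def by auto

lemma avoids132_map_strict_mono:
  assumes "strict_mono f"
  shows "avoids132 (map f \<sigma>) \<longleftrightarrow> avoids132 \<sigma>"
  using strict_mono_less[OF assms] unfolding avoids132_def by auto

lemma avoids132_appendD:
  assumes "avoids132 (xs @ ys)"
  shows "avoids132 xs" "avoids132 ys"
proof -
  show "avoids132 xs"
    unfolding avoids132_def
  proof clarify
    fix a b c assume pat: "a < b" "b < c" "c < length xs" "xs ! a < xs ! c" "xs ! c < xs ! b"
    then have "(xs @ ys) ! a < (xs @ ys) ! c" "(xs @ ys) ! c < (xs @ ys) ! b" "c < length (xs @ ys)"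
      by (simp_all add: nth_append)
    then show False
      using assms pat(1,2) unfolding avoids132_def by blast
  qed
  show "avoids132 ys"
    unfolding avoids132_def
  proof clarify
    fix a b c assume pat: "a < b" "b < c" "c < length ys" "ys ! a < ys ! c" "ys ! c < ys ! b"
    let ?l = "length xs"
    have "(xs @ ys) ! (?l + a) < (xs @ ys) ! (?l + c)" "(xs @ ys) ! (?l + c) < (xs @ ys) ! (?l + b)"
         "?l + c < length (xs @ ys)" "?l + a < ?l + b" "?l + b < ?l + c"
      using pat by simp_all
    then show False
      using assms unfolding avoids132_def by blast
  qed
qed
lemma avoids132_max_split_le:
  assumes "avoids132 (xs @ m # ys)" "x \<in> set xs" "y \<in> set ys" "y < m"
  shows "y \<le> x"
proof (rule ccontr)
  assume "\<not> y \<le> x"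
  obtain a where a: "a < length xs" "xs ! a = x" using assms(2) by (auto simp: in_set_conv_nth)
  obtain c where c: "c < length ys" "ys ! c = y" using assms(3) by (auto simp: in_set_conv_nth)
  let ?L = "xs @ m # ys"
  have "?L ! a = x" "?L ! length xs = m" "?L ! (length xs + Suc c) = y"
    using a c by (simp_all add: nth_append)
  moreover have "a < length xs" "length xs < length xs + Suc c" "length xs + Suc c < length ?L"
    using a c by simp_all
  ultimately show False
    using assms(1,4) \<open>\<not> y \<le> x\<close> unfolding avoids132_def by (metis not_le)
qed

lemma avoids132_append_max:
  assumes xs_below: "\<forall>x\<in>set xs. x < m" and ys_below: "\<forall>y\<in>set ys. y < m"
  shows "avoids132 (xs @ m # ys) \<longleftrightarrow>
           avoids132 xs \<and> avoids132 ys \<and> (\<forall>x\<in>set xs. \<forall>y\<in>set ys. y \<le> x)"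
proof
  assume "avoids132 (xs @ m # ys)"
  then show "avoids132 xs \<and> avoids132 ys \<and> (\<forall>x\<in>set xs. \<forall>y\<in>set ys. y \<le> x)"
    using avoids132_appendD[of xs "m # ys"] avoids132_appendD[of "[m]" ys]
      avoids132_max_split_le[of xs m ys] ys_below by auto
next
  let ?L = "xs @ m # ys"
  assume parts: "avoids132 xs \<and> avoids132 ys \<and> (\<forall>x\<in>set xs. \<forall>y\<in>set ys. y \<le> x)"
  have dominates: "y \<le> ?L ! i" if "i \<le> length xs" "y \<in> set ys" for i y
    using that parts ys_below by (cases "i = length xs") (auto simp: nth_append less_imp_le)
  show "avoids132 ?L"
    unfolding avoids132_def
  proof clarify
    fix a b c assume pat: "a < b" "b < c" "c < length ?L" "?L ! a < ?L ! c" "?L ! c < ?L ! b"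
    consider "c < length xs" | "c = length xs" | "length xs < c" by linarith
    then show False
    proof cases
      case 1
      then show False using pat parts unfolding avoids132_def by (auto simp: nth_append)
    next
      case 2
      then have "?L ! b \<in> set xs" using pat(2) by (simp add: nth_append)
      then show False using pat(5) 2 xs_below by auto
    next
      case 3
      define c' where "c' = c - Suc (length xs)"
      have c': "c = length xs + Suc c'" "c' < length ys" using 3 pat(3) unfolding c'_def by auto
      then have "?L ! c \<in> set ys" by (simp add: nth_append)
      then have "length xs < a" using dominates[of a] pat(4) by (meson leD not_less)
      define a' b' where "a' = a - Suc (length xs)" and "b' = b - Suc (length xs)"
      have "a = length xs + Suc a'" "b = length xs + Suc b'"
        using \<open>length xs < a\<close> pat(1) unfolding a'_def b'_def by simp_all
      then have "ys ! a' < ys ! c'" "ys ! c' < ys ! b'" "a' < b'" "b' < c'"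
        using pat c' by (simp_all add: nth_append)
      then show False using parts c'(2) unfolding avoids132_def by blast
    qed
  qed
qed

lemma interval_partition:
  fixes A B :: "nat set"
  assumes union: "A \<union> B = {1..n}" and disjoint: "A \<inter> B = {}" and B_below: "\<forall>x\<in>A. \<forall>y\<in>B. y < x"
  shows "B = {1..card B}" "A = {card B<..n}"
proof -
  have B_sub: "B \<subseteq> {1..n}" using union by blast
  then have fin: "finite B" by (rule finite_subset) simp
  have "y \<le> card B" if y: "y \<in> B" for y
  proof -
    have "{1..y} \<subseteq> B"
    proof
      fix z assume z: "z \<in> {1..y}"
      have "y \<le> n" using B_sub y by auto
      then have "z \<in> A \<union> B" using z unfolding union by simp
      moreover have "z \<notin> A" using z y B_below by fastforce
      ultimately show "z \<in> B" by blast
    qed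
    then have "card {1..y} \<le> card B" by (rule card_mono[OF fin])
    then show ?thesis by simp
  qed
  then have "B \<subseteq> {1..card B}" using B_sub by auto
  then show B: "B = {1..card B}" by (intro card_subset_eq) simp_all
  have "card B \<le> n" using card_mono[OF _ B_sub] by simp
  moreover have "A = {1..n} - {1..card B}" using union disjoint B by blast
  ultimately show "A = {card B<..n}" by auto
qed

lemma av132_shift_cases:
  assumes "length \<gamma> = k" "distinct \<gamma>" "set \<gamma> = {e<..k + e}" "avoids132 \<gamma>"
  obtains \<alpha> where "\<gamma> = map (\<lambda>x. x + e) \<alpha>" "\<alpha> \<in> av132 k"
proof
  define \<alpha> where "\<alpha> = map (\<lambda>x. x - e) \<gamma>"
  show \<gamma>: "\<gamma> = map (\<lambda>x. x + e) \<alpha>"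
    unfolding \<alpha>_def map_map by (rule sym, rule map_idI) (use assms(3) in auto)
  have "distinct \<alpha>" "avoids132 \<alpha>"
    using assms(2,4) unfolding \<gamma> by (simp_all add: distinct_map avoids132_map_strict_mono strict_mono_add)
  moreover have "set \<alpha> = {1..k}"
    unfolding \<alpha>_def using assms(3) by (force simp: image_iff intro: bexI[of _ "_ + e"])
  ultimately show "\<alpha> \<in> av132 k" using assms(1) unfolding av132_iff \<alpha>_def by simp
qed

definition perm_join :: "nat list \<Rightarrow> nat list \<Rightarrow> nat list" where
  "perm_join \<alpha> \<beta> = map (\<lambda>x. x + length \<beta>) \<alpha> @ (length \<alpha> + length \<beta> + 1) # \<beta>"

lemma av132_perm_join:
  assumes \<alpha>: "\<alpha> \<in> av132 k" and \<beta>: "\<beta> \<in> av132 e"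
  shows "perm_join \<alpha> \<beta> \<in> av132 (k + e + 1)"
proof -
  have sets: "set \<alpha> = {1..k}" "set \<beta> = {1..e}" and lengths: "length \<alpha> = k" "length \<beta> = e"
    using assms by (simp_all add: av132_iff)
  have shifted: "set (map (\<lambda>x. x + e) \<alpha>) = {e + 1..k + e}"
    using sets by (simp add: image_add_atLeastAtMost' add.commute)
  have "avoids132 (map (\<lambda>x. x + e) \<alpha> @ (k + e + 1) # \<beta>)"
  proof (subst avoids132_append_max)
    show "\<forall>x\<in>set (map (\<lambda>x. x + e) \<alpha>). x < k + e + 1" "\<forall>y\<in>set \<beta>. y < k + e + 1"
      using shifted sets by auto
    show "avoids132 (map (\<lambda>x. x + e) \<alpha>) \<and> avoids132 \<beta> \<and>
        (\<forall>x\<in>set (map (\<lambda>x. x + e) \<alpha>). \<forall>y\<in>set \<beta>. y \<le> x)"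
      using assms shifted sets by (simp add: av132_iff avoids132_map_strict_mono strict_mono_add)
  qed
  moreover have "distinct (map (\<lambda>x. x + e) \<alpha>)" using \<alpha> by (simp add: av132_iff distinct_map)
  moreover have "set (map (\<lambda>x. x + e) \<alpha>) \<union> {k + e + 1} \<union> set \<beta> = {1..k + e + 1}"
    using shifted sets by auto
  ultimately show ?thesis
    using \<beta> shifted sets unfolding perm_join_def by (auto simp: av132_iff lengths)
qed

lemma av132_perm_join_cases:
  assumes \<pi>: "\<pi> \<in> av132 n" and "0 < n"
  obtains \<alpha> \<beta> where "\<pi> = perm_join \<alpha> \<beta>" "\<alpha> \<in> av132 (length \<alpha>)" "\<beta> \<in> av132 (length \<beta>)"
proof -
  have props: "length \<pi> = n" "distinct \<pi>" "set \<pi> = {1..n}" "avoids132 \<pi>"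
    using \<pi> by (simp_all add: av132_iff)
  have "n \<in> set \<pi>" using props(3) \<open>0 < n\<close> by simp
  then obtain \<gamma> \<beta> where \<pi>_split: "\<pi> = \<gamma> @ n # \<beta>" by (meson split_list)
  define e where "e = length \<beta>"
  define k where "k = length \<gamma>"
  have n: "n = k + e + 1" using props(1) \<pi>_split unfolding k_def e_def by simp
  have distinct: "distinct \<gamma>" "distinct \<beta>" "set \<gamma> \<inter> set \<beta> = {}" "n \<notin> set \<gamma>" "n \<notin> set \<beta>"
    using props(2) \<pi>_split by auto
  have "set \<gamma> \<union> set \<beta> = {1..n} - {n}" using props(3) distinct(4,5) unfolding \<pi>_split by auto
  also have "\<dots> = {1..k + e}" using n by auto
  finally have union: "set \<gamma> \<union> set \<beta> = {1..k + e}" .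
  then have "\<forall>x\<in>set \<gamma> \<union> set \<beta>. x < n" using n by simp
  then have below: "\<forall>x\<in>set \<gamma>. x < n" "\<forall>y\<in>set \<beta>. y < n" by simp_all
  have avoids: "avoids132 \<gamma>" "avoids132 \<beta>" and le: "\<forall>x\<in>set \<gamma>. \<forall>y\<in>set \<beta>. y \<le> x"
    using props(4) avoids132_append_max[OF below] unfolding \<pi>_split by auto
  have "\<forall>x\<in>set \<gamma>. \<forall>y\<in>set \<beta>. y < x"
    using le distinct(3) by (metis disjoint_iff order_less_le)
  from interval_partition[OF union distinct(3) this]
  have \<beta>_set: "set \<beta> = {1..e}" and \<gamma>_set: "set \<gamma> = {e<..k + e}"
    using distinct(2) unfolding e_def by (simp_all add: distinct_card)
  obtain \<alpha> where \<gamma>: "\<gamma> = map (\<lambda>x. x + e) \<alpha>" and \<alpha>: "\<alpha> \<in> av132 k"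
    using av132_shift_cases[OF k_def[symmetric] distinct(1) \<gamma>_set avoids(1)] .
  have "length \<alpha> = k" using \<alpha> by (simp add: av132_iff)
  show ?thesis
  proof (rule that)
    show "\<pi> = perm_join \<alpha> \<beta>" unfolding \<pi>_split \<gamma> perm_join_def n e_def \<open>length \<alpha> = k\<close> by simp
    show "\<alpha> \<in> av132 (length \<alpha>)" using \<alpha> \<open>length \<alpha> = k\<close> by simp
    show "\<beta> \<in> av132 (length \<beta>)"
      using \<beta>_set distinct(2) avoids(2) unfolding av132_iff e_def by simp
  qed
qed

lemma perm_join_inj:
  assumes eq: "perm_join \<alpha> \<beta> = perm_join \<alpha>' \<beta>'"
    and "\<alpha> \<in> av132 k" "\<beta> \<in> av132 e" "\<alpha>' \<in> av132 k'" "\<beta>' \<in> av132 e'"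
  shows "\<alpha> = \<alpha>' \<and> \<beta> = \<beta>'"
proof -
  have lengths: "length \<alpha> = k" "length \<beta> = e" "length \<alpha>' = k'" "length \<beta>' = e'"
    using assms(2-5) by (simp_all add: av132_iff)
  have "k' + e' + 1 = k + e + 1"
    using arg_cong[OF eq, of length] lengths unfolding perm_join_def by simp
  then have "map (\<lambda>x. x + e) \<alpha> @ (k + e + 1) # \<beta> = map (\<lambda>x. x + e') \<alpha>' @ (k + e + 1) # \<beta>'"
    using eq unfolding perm_join_def lengths by simp
  moreover have "k + e + 1 \<notin> set (map (\<lambda>x. x + e) \<alpha>)" "k + e + 1 \<notin> set \<beta>"
    using assms(2,3) by (auto simp: av132_iff)
  ultimately have "map (\<lambda>x. x + e) \<alpha> = map (\<lambda>x. x + e') \<alpha>'" "\<beta> = \<beta>'"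
    by (simp_all add: append_Cons_eq_iff)
  then show ?thesis using lengths by (simp add: inj_map_eq_map inj_on_def)
qed

fun ascents :: "'a::linorder list \<Rightarrow> bool list" where
  "ascents (x # y # zs) = (x < y) # ascents (y # zs)"
| "ascents _ = []"

lemma length_ascents [simp]: "length (ascents xs) = length xs - 1"
  by (induction xs rule: ascents.induct) auto

lemma nth_ascents: "Suc i < length xs \<Longrightarrow> ascents xs ! i \<longleftrightarrow> xs ! i < xs ! Suc i"
proof (induction xs arbitrary: i rule: ascents.induct)
  case (1 x y zs)
  then show ?case by (cases i) auto
qed auto

lemma ascents_append:
  "xs \<noteq> [] \<Longrightarrow> ys \<noteq> [] \<Longrightarrow> ascents (xs @ ys) = ascents xs @ (last xs < hd ys) # ascents ys"
proof (induction xs)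
  case (Cons x xs)
  then show ?case by (cases xs; cases ys) auto
qed simp

lemma ascents_map_strict_mono:
  assumes "strict_mono f"
  shows "ascents (map f xs) = ascents xs"
  by (induction xs rule: ascents.induct) (auto simp: strict_mono_less[OF assms])

lemma ascents_snoc_above:
  assumes "\<forall>x\<in>set xs. x < a"
  shows "ascents (xs @ [a]) = (if xs = [] then [] else ascents xs @ [True])"
  using assms by (auto simp: ascents_append)

(* trues_after c b p counts the letters True of p preceded by the letter c, where b stands for the
   letter before p. Double ascents are the pairs True, True of the ascent word; ascending runs start
   exactly at its letters True preceded by False or by nothing. *)
fun trues_after :: "bool \<Rightarrow> bool \<Rightarrow> bool list \<Rightarrow> nat" where
  "trues_after c b [] = 0"
| "trues_after c b (a # p) = (if a \<and> b = c then 1 else 0) + trues_after c a p"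

lemma trues_after_append:
  "trues_after c b (p @ q) = trues_after c b p + trues_after c (last (b # p)) q"
  by (induction p arbitrary: b) auto

lemma card_Collect_less_Suc:
  "card {i. i < Suc n \<and> P i} = (if P 0 then 1 else 0) + card {i. i < n \<and> P (Suc i)}"
proof -
  have "{i. i < Suc n \<and> P i} = (if P 0 then {0} else {}) \<union> Suc ` {i. i < n \<and> P (Suc i)}"
    by (auto simp: less_Suc_eq_0_disj)
  then show ?thesis by (simp add: card_image)
qed

lemma trues_after_eq_card:
  "trues_after c b p = card {i. i < length p \<and> p ! i \<and> (b # p) ! i = c}"
proof (induction p arbitrary: b)
  case (Cons a p)
  show ?case by (simp add: card_Collect_less_Suc Cons.IH del: nth_Cons_Suc)
qed simp

lemma double_ascents_eq_trues_after:
  "double_ascents \<sigma> = trues_after True False (ascents \<sigma>)"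
proof -
  let ?p = "ascents \<sigma>"
  have "{i. i < length ?p \<and> ?p ! i \<and> (False # ?p) ! i = True} =
        Suc ` {i. i + 2 < length \<sigma> \<and> \<sigma> ! i < \<sigma> ! (i + 1) \<and> \<sigma> ! (i + 1) < \<sigma> ! (i + 2)}"
  proof (rule set_eqI)
    fix i
    show "i \<in> {i. i < length ?p \<and> ?p ! i \<and> (False # ?p) ! i = True} \<longleftrightarrow>
          i \<in> Suc ` {i. i + 2 < length \<sigma> \<and> \<sigma> ! i < \<sigma> ! (i + 1) \<and> \<sigma> ! (i + 1) < \<sigma> ! (i + 2)}"
      by (cases i) (auto simp: nth_ascents)
  qed
  then show ?thesis
    unfolding double_ascents_def trues_after_eq_card by (simp add: card_image)
qed

lemma maximal_ascending_run_exists: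
  fixes \<sigma> :: "'a::linorder list"
  assumes "Suc i < length \<sigma>" "\<sigma> ! i < \<sigma> ! Suc i"
  obtains j where "i < j" "j < length \<sigma>" "\<forall>k. i \<le> k \<and> k < j \<longrightarrow> \<sigma> ! k < \<sigma> ! Suc k"
    "Suc j = length \<sigma> \<or> \<not> \<sigma> ! j < \<sigma> ! Suc j"
proof -
  define ends where "ends j \<longleftrightarrow> i < j \<and> (Suc j = length \<sigma> \<or> \<not> \<sigma> ! j < \<sigma> ! Suc j)" for j
  define j where "j = (LEAST j. ends j)"
  have "ends (length \<sigma> - 1)" unfolding ends_def using assms by auto
  then have "ends j" "j \<le> length \<sigma> - 1" unfolding j_def by (auto intro: LeastI Least_le)
  moreover have "\<sigma> ! k < \<sigma> ! Suc k" if "i \<le> k" "k < j" for k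
  proof (cases "k = i")
    case False
    then have "\<not> ends k" using that(2) not_less_Least unfolding j_def by blast
    then show ?thesis using that False \<open>j \<le> length \<sigma> - 1\<close> unfolding ends_def by auto
  qed (use assms in simp)
  ultimately show ?thesis using that assms unfolding ends_def by auto
qed

lemma asc_runs_eq_card_starts:
  "asc_runs \<sigma> =
     card {i. Suc i < length \<sigma> \<and> \<sigma> ! i < \<sigma> ! Suc i \<and> (i = 0 \<or> \<not> \<sigma> ! (i - 1) < \<sigma> ! i)}"
  (is "_ = card ?starts")
proof -
  define runs where "runs = {(i, j). i < j \<and> j < length \<sigma> \<and>
      (\<forall>k. i \<le> k \<and> k < j \<longrightarrow> \<sigma> ! k < \<sigma> ! (k+1)) \<and>
      (i = 0 \<or> \<not> \<sigma> ! (i - 1) < \<sigma> ! i) \<and>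
      (j + 1 = length \<sigma> \<or> \<not> \<sigma> ! j < \<sigma> ! (j+1))}"
  have run_end_unique: "j = j'" if "(i, j) \<in> runs" "(i, j') \<in> runs" for i j j'
  proof -
    have "\<not> j < j'" if "(i, j) \<in> runs" "(i, j') \<in> runs" for j j'
      using that unfolding runs_def by auto
    then show ?thesis using that by (meson linorder_neqE_nat)
  qed
  have "inj_on fst runs"
  proof (rule inj_onI)
    fix x y assume "x \<in> runs" "y \<in> runs" "fst x = fst y"
    then show "x = y" using run_end_unique by (metis prod.collapse)
  qed
  moreover have "fst ` runs = ?starts"
  proof
    show "fst ` runs \<subseteq> ?starts" unfolding runs_def by force
    show "?starts \<subseteq> fst ` runs"
    proof
      fix i assume "i \<in> ?starts"
      then have start: "Suc i < length \<sigma>" "\<sigma> ! i < \<sigma> ! Suc i" "i = 0 \<or> \<not> \<sigma> ! (i - 1) < \<sigma> ! i"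
        by simp_all
      obtain j where "i < j" "j < length \<sigma>" "\<forall>k. i \<le> k \<and> k < j \<longrightarrow> \<sigma> ! k < \<sigma> ! Suc k"
          "Suc j = length \<sigma> \<or> \<not> \<sigma> ! j < \<sigma> ! Suc j"
        using maximal_ascending_run_exists[OF start(1,2)] .
      then have "(i, j) \<in> runs" using start(3) unfolding runs_def by simp
      then show "i \<in> fst ` runs" by (metis fst_conv image_eqI)
    qed
  qed
  ultimately show ?thesis
    unfolding asc_runs_def runs_def[symmetric] by (metis card_image)
qed

lemma asc_runs_eq_trues_after:
  "asc_runs \<sigma> = trues_after False False (ascents \<sigma>)"
proof -
  let ?p = "ascents \<sigma>"
  have "{i. Suc i < length \<sigma> \<and> \<sigma> ! i < \<sigma> ! Suc i \<and> (i = 0 \<or> \<not> \<sigma> ! (i - 1) < \<sigma> ! i)} =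
        {i. i < length ?p \<and> ?p ! i \<and> (False # ?p) ! i = False}"
    by (rule Collect_cong) (auto simp: nth_Cons' nth_ascents)
  then show ?thesis by (simp add: asc_runs_eq_card_starts trues_after_eq_card)
qed

lemma ptree_cases_snoc:
  obtains (Nil) "T = Node []" | (snoc) ts t where "T = Node (ts @ [t])"
  by (metis ptree.exhaust rev_exhaust)

function tree_perm :: "ptree \<Rightarrow> nat list" where
  "tree_perm (Node []) = []"
| "tree_perm (Node (ts @ [t])) = perm_join (tree_perm (Node ts)) (tree_perm t)"
  by (metis ptree_cases_snoc) auto
termination
  by (relation "measure size") auto

lemma edges_snoc: "edges (Node (ts @ [t])) = edges (Node ts) + edges t + 1"
  by simp

lemma edges_eq_0_iff: "edges T = 0 \<longleftrightarrow> T = Node []"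
  by (cases T) auto

lemma young_leaves_snoc:
  "young_leaves (Node (ts @ [t])) =
     young_leaves (Node ts) + young_leaves t + (if ts \<noteq> [] \<and> t = Node [] then 1 else 0)"
  by (cases ts) auto

lemma old_leaves_snoc:
  "old_leaves (Node (ts @ [t])) =
     old_leaves (Node ts) + old_leaves t + (if ts = [] \<and> t = Node [] then 1 else 0)"
  by (cases ts) auto

lemma tree_perm_av132: "tree_perm T \<in> av132 (edges T)"
proof (induction T rule: tree_perm.induct)
  case 1
  show ?case by (simp add: av132_iff avoids132_def)
next
  case (2 ts t)
  then show ?case unfolding tree_perm.simps edges_snoc by (rule av132_perm_join)
qed

lemma tree_perm_inj: "tree_perm T = tree_perm T' \<Longrightarrow> T = T'"
proof (induction T arbitrary: T' rule: tree_perm.induct)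
  case 1
  then have "edges T' = 0" using tree_perm_av132[of T'] by (simp add: av132_iff)
  then show ?case by (simp add: edges_eq_0_iff)
next
  case (2 ts t)
  show ?case
  proof (cases T' rule: ptree_cases_snoc)
    case Nil
    then show ?thesis using "2.prems" by (simp add: perm_join_def)
  next
    case (snoc ts' t')
    have "tree_perm (Node ts) = tree_perm (Node ts') \<and> tree_perm t = tree_perm t'"
      using "2.prems" unfolding snoc tree_perm.simps by (rule perm_join_inj) (rule tree_perm_av132)+
    then show ?thesis using "2.IH"(1)[of "Node ts'"] "2.IH"(2)[of t'] snoc by simp
  qed
qed

lemma tree_perm_surj: "\<pi> \<in> av132 n \<Longrightarrow> \<exists>T. edges T = n \<and> tree_perm T = \<pi>"
proof (induction n arbitrary: \<pi> rule: less_induct)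
  case (less n)
  show ?case
  proof (cases "n = 0")
    case True
    then show ?thesis using less.prems by (intro exI[of _ "Node []"]) (simp add: av132_iff)
  next
    case False
    then obtain \<alpha> \<beta> where \<pi>: "\<pi> = perm_join \<alpha> \<beta>"
        and \<alpha>: "\<alpha> \<in> av132 (length \<alpha>)" and \<beta>: "\<beta> \<in> av132 (length \<beta>)"
      using less.prems av132_perm_join_cases by blast
    have n: "n = length \<alpha> + length \<beta> + 1"
      using less.prems unfolding \<pi> by (simp add: av132_iff perm_join_def)
    obtain ts where "edges (Node ts) = length \<alpha>" "tree_perm (Node ts) = \<alpha>"
      using less.IH[OF _ \<alpha>] n by (metis less_add_one add_lessD1 ptree.exhaust)
    moreover obtain t where "edges t = length \<beta>" "tree_perm t = \<beta>"
      using less.IH[OF _ \<beta>] n by auto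
    ultimately show ?thesis
      by (intro exI[of _ "Node (ts @ [t])"]) (simp only: edges_snoc tree_perm.simps n \<pi>)
  qed
qed

lemma bij_betw_tree_perm: "bij_betw tree_perm {T. edges T = n} (av132 n)"
  unfolding bij_betw_def inj_on_def
  using tree_perm_inj tree_perm_av132 tree_perm_surj by blast

lemma ascents_perm_join_snoc:
  assumes "\<alpha> \<in> av132 k" "\<beta> \<in> av132 e"
  shows "ascents (perm_join \<alpha> \<beta> @ [k + e + 2]) =
           ascents (\<alpha> @ [k + 1]) @ (\<beta> = []) # ascents (\<beta> @ [e + 1])"
proof -
  have sets: "set \<alpha> = {1..k}" "set \<beta> = {1..e}" and lengths: "length \<alpha> = k" "length \<beta> = e"
    using assms by (simp_all add: av132_iff)
  let ?\<alpha>' = "map (\<lambda>x. x + e) (\<alpha> @ [k + 1])"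
  have "ascents (perm_join \<alpha> \<beta> @ [k + e + 2]) = ascents (?\<alpha>' @ \<beta> @ [k + e + 2])"
    unfolding perm_join_def lengths by simp
  also have "\<dots> = ascents ?\<alpha>' @ (last ?\<alpha>' < hd (\<beta> @ [k + e + 2])) # ascents (\<beta> @ [k + e + 2])"
    by (rule ascents_append) simp_all
  also have "ascents ?\<alpha>' = ascents (\<alpha> @ [k + 1])"
    by (rule ascents_map_strict_mono[OF strict_mono_add])
  also have "last ?\<alpha>' < hd (\<beta> @ [k + e + 2]) \<longleftrightarrow> \<beta> = []"
    using sets(2) hd_in_set[of \<beta>] by (cases "\<beta> = []") auto
  also have "ascents (\<beta> @ [k + e + 2]) = ascents (\<beta> @ [e + 1])"
    using sets(2) by (simp add: ascents_snoc_above)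
  finally show ?thesis .
qed

lemma leaves_eq_trues_after_ascents:
  "young_leaves T = trues_after True False (ascents (tree_perm T @ [edges T + 1])) \<and>
   old_leaves T = trues_after False False (ascents (tree_perm T @ [edges T + 1]))"
proof (induction T rule: tree_perm.induct)
  case 1
  show ?case by simp
next
  case (2 ts t)
  let ?w = "\<lambda>T. ascents (tree_perm T @ [edges T + 1])"
  have "?w (Node (ts @ [t])) =
      ascents (perm_join (tree_perm (Node ts)) (tree_perm t) @ [edges (Node ts) + edges t + 2])"
    by (simp add: edges_snoc del: edges.simps)
  also have "\<dots> = ?w (Node ts) @ (tree_perm t = []) # ?w t"
    by (rule ascents_perm_join_snoc[OF tree_perm_av132 tree_perm_av132])
  also have "tree_perm t = [] \<longleftrightarrow> t = Node []"
    by (metis tree_perm.simps(1) tree_perm_inj)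
  finally have word: "?w (Node (ts @ [t])) = ?w (Node ts) @ (t = Node []) # ?w t" .
  have "\<forall>x\<in>set (tree_perm T). x < edges T + 1" for T
    using tree_perm_av132[of T] by (auto simp: av132_iff)
  then have last: "last (False # ?w T) \<longleftrightarrow> T \<noteq> Node []" for T
    using tree_perm_av132[of T] by (auto simp: ascents_snoc_above av132_iff edges_eq_0_iff)
  show ?case
    using "2.IH" last[of "Node ts"] last[of t]
    unfolding word young_leaves_snoc old_leaves_snoc trues_after_append
    by (cases "t = Node []") auto
qed

theorem mainTheorem13:
  fixes n :: nat
  assumes "n \<ge> 1"
  shows "\<exists>\<psi>. bij_betw \<psi> {T. edges T = n} (av132 n) \<and>
           (\<forall>T. edges T = n \<longrightarrow>
              young_leaves T = double_ascents (\<psi> T @ [n+1]) \<and>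
              old_leaves T = asc_runs (\<psi> T @ [n+1]))"
  using bij_betw_tree_perm leaves_eq_trues_after_ascents
  by (auto simp: double_ascents_eq_trues_after asc_runs_eq_trues_after)

end
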